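(* There is an absolute constant $C>0$ such that the following holds. Let $n \geq 4$ be even and let $\mathcal{G}=\{G_t : t\in\mathbb{N}\}$ be an evolving graph on node set $[n]$. Suppose there exist an increasing sequence of reals $1=h_0\leq h_1<\dots<h_s=n/2$ and a non-increasing sequence of positive reals $k_1\geq\dots\geq k_s$ such that for every $t\in\mathbb{N}$ and every $i=1,\dots,s$ the graph $G_t$ is an $(h_i,k_i)$-expander. Then the flooding time of $\mathcal{G}$ is at most $$C\sum_{i=1}^s \frac{\log(h_i/h_{i-1})}{\log(1+k_i)}.$$
   Context: Logarithms are natural. An evolving graph is a sequence $\{G_t:t\in\mathbb{N}\}$ of graphs all on the node set $[n]=\{1,\dots,n\}$. For a graph $G=([n],E)$ and $I\subseteq[n]$, $N(I)=\{v\in[n]\setminus I : \{u,v\}\in E \text{ for some } u\in I\}$. $G$ is an $(h,k)$-expander if every $I\subseteq[n]$ with $|I|\leq h$ satisfies $|N(I)|\geq k|I|$. Flooding from a source $s\in[n]$: $I_0=\{s\}$, $I_{t+1}=I_t\cup N_t(I_t)$, where $N_t$ is the out-neighborhood in $G_t$. $T(s)$ is the first $t$ with $I_t=[n]$, and the flooding time of $\mathcal{G}$ is $\max_{s\in[n]}T(s)$. *)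

theory Defs
  imports Complex_Main
begin

definition is_graph :: "nat \<Rightarrow> nat set set \<Rightarrow> bool" where
  "is_graph n E \<longleftrightarrow> (\<forall>e\<in>E. \<exists>u v. e = {u, v} \<and> u \<noteq> v \<and> u \<in> {1..n} \<and> v \<in> {1..n})"

definition evolving_graph :: "nat \<Rightarrow> (nat \<Rightarrow> nat set set) \<Rightarrow> bool" where
  "evolving_graph n G \<longleftrightarrow> (\<forall>t. is_graph n (G t))"

definition nbhd :: "nat \<Rightarrow> nat set set \<Rightarrow> nat set \<Rightarrow> nat set" where
  "nbhd n E I = {v \<in> {1..n} - I. \<exists>u\<in>I. {u, v} \<in> E}"

definition expander :: "nat \<Rightarrow> nat set set \<Rightarrow> real \<Rightarrow> real \<Rightarrow> bool" where
  "expander n E h k \<longleftrightarrow>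
     (\<forall>I. I \<subseteq> {1..n} \<and> real (card I) \<le> h \<longrightarrow> real (card (nbhd n E I)) \<ge> k * real (card I))"

primrec flood :: "nat \<Rightarrow> (nat \<Rightarrow> nat set set) \<Rightarrow> nat \<Rightarrow> nat \<Rightarrow> nat set" where
  "flood n G s 0 = {s}"
| "flood n G s (Suc t) = flood n G s t \<union> nbhd n (G t) (flood n G s t)"

definition flood_T :: "nat \<Rightarrow> (nat \<Rightarrow> nat set set) \<Rightarrow> nat \<Rightarrow> nat" where
  "flood_T n G s = (LEAST t. flood n G s t = {1..n})"

definition flooding_time_le :: "nat \<Rightarrow> (nat \<Rightarrow> nat set set) \<Rightarrow> real \<Rightarrow> bool" where
  "flooding_time_le n G b \<longleftrightarrow>
     (\<forall>s\<in>{1..n}. (\<exists>t. flood n G s t = {1..n}) \<and> real (flood_T n G s) \<le> b)"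

end

theory Submission
  imports Defs
begin

text \<open>
  Fix a source v.  While the informed set I has size x \<le> n/2 it lies in
  some phase i (h(i-1) < x \<le> h i), and one flooding round multiplies x by at least
  1 + k i.  We measure progress with a potential \<Phi>(x): the sum over the phases j of
  the logarithmic length of the part of [h(j-1), h j] below x, weighted by 1/ln(1 + k j).
  Because the k j are non-increasing, a round raises \<Phi> by at least 1; since \<Phi> is
  bounded by S = \<Phi>(n/2) = \<Sum>i. ln(h i / h(i-1)) / ln(1 + k i), after M = \<lfloor>S\<rfloor> + 1
  rounds more than n/2 nodes are informed.  The same holds for the time-reversed
  graph sequence started from any target u, and the two sets of size > n/2 meet;
  hence u is informed after 2M rounds.  Finally S \<ge> 1/2, so 2M \<le> 6S.
\<close>

section \<open>Flooding from a set of nodes\<close>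

primrec flood_from :: "nat \<Rightarrow> (nat \<Rightarrow> nat set set) \<Rightarrow> nat set \<Rightarrow> nat \<Rightarrow> nat set" where
  "flood_from n G A 0 = A"
| "flood_from n G A (Suc t) = flood_from n G A t \<union> nbhd n (G t) (flood_from n G A t)"

lemma flood_eq_flood_from: "flood n G s t = flood_from n G {s} t"
  by (induction t) auto

lemma flood_from_mono_set: "A \<subseteq> B \<Longrightarrow> flood_from n G A t \<subseteq> flood_from n G B t"
  by (induction t) (auto simp: nbhd_def)

lemma flood_from_subset: "A \<subseteq> {1..n} \<Longrightarrow> flood_from n G A t \<subseteq> {1..n}"
  by (induction t) (auto simp: nbhd_def)

lemma flood_from_mono_time: "t \<le> t' \<Longrightarrow> flood_from n G A t \<subseteq> flood_from n G A t'"
  by (induction t' rule: dec_induct) auto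

lemma flood_from_cong: "(\<And>j. j < t \<Longrightarrow> G j = G' j) \<Longrightarrow> flood_from n G A t = flood_from n G' A t"
  by (induction t) auto

lemma flood_from_shift: "flood_from n G A (a + b) = flood_from n (\<lambda>j. G (a + j)) (flood_from n G A a) b"
  by (induction b) auto

text \<open>Time reversal: since edges are undirected, if w is informed from v when the
  graphs G 0, ..., G(m-1) are played backwards, then v is informed from w when they
  are played forwards.  This is what lets the target "flood back" towards the source.\<close>
lemma flood_from_reverse:
  assumes "v \<in> {1..n}" "w \<in> flood_from n (\<lambda>j. G (m - 1 - j)) {v} m"
  shows "v \<in> flood_from n G {w} m"
  using assms
proof (induction m arbitrary: G w)
  case 0
  then show ?case by simp
next
  case (Suc m)
  define G' where "G' = (\<lambda>j. G (Suc j))"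
  let ?F = "flood_from n (\<lambda>j. G (Suc m - 1 - j)) {v} m"
  have F_eq: "?F = flood_from n (\<lambda>j. G' (m - 1 - j)) {v} m"
    by (rule flood_from_cong) (simp add: G'_def Suc_diff_Suc)
  have F_sub: "?F \<subseteq> {1..n}"
    using Suc.prems(1) by (intro flood_from_subset) auto
  have after_first_round: "flood_from n G' {u} m \<subseteq> flood_from n G {w} (Suc m)"
    if "u \<in> flood_from n G {w} 1" for u
  proof -
    have "flood_from n G {w} (Suc m) = flood_from n G' (flood_from n G {w} 1) m"
      using flood_from_shift[of n G "{w}" 1 m] by (simp add: G'_def)
    then show ?thesis using flood_from_mono_set[of "{u}"] that by auto
  qed
  have "w \<in> ?F \<union> nbhd n (G 0) ?F"
    using Suc.prems(2) by simp
  then show ?case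
  proof
    assume "w \<in> ?F"
    then have "v \<in> flood_from n G' {w} m"
      using Suc.IH[of w G'] Suc.prems(1) F_eq by simp
    then show ?thesis using after_first_round[of w] by auto
  next
    assume "w \<in> nbhd n (G 0) ?F"
    then obtain u where u: "u \<in> ?F" "{u, w} \<in> G 0" "w \<in> {1..n}"
      unfolding nbhd_def by auto
    then have "v \<in> flood_from n G' {u} m"
      using Suc.IH[of u G'] Suc.prems(1) F_eq by simp
    moreover have "u \<in> flood_from n G {w} 1"
      using u F_sub by (auto simp: nbhd_def insert_commute)
    ultimately show ?thesis using after_first_round by blast
  qed
qed

section \<open>Meeting in the middle\<close>

lemma large_subsets_intersect:
  assumes A: "A \<subseteq> {1..n}" "real n / 2 < real (card A)"
    and B: "B \<subseteq> {1..n}" "real n / 2 < real (card B)"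
  shows "A \<inter> B \<noteq> {}"
proof
  assume "A \<inter> B = {}"
  moreover have "finite A" "finite B"
    using A(1) B(1) finite_subset by auto
  ultimately have "card A + card B = card (A \<union> B)"
    by (simp add: card_Un_disjoint)
  also have "\<dots> \<le> n"
    using card_mono[of "{1..n}" "A \<union> B"] A(1) B(1) by simp
  finally show False
    using A(2) B(2) by linarith
qed

text \<open>If, for every graph sequence whose graphs all have property P, flooding from
  any node informs more than half of the nodes within M rounds, then flooding
  completes within 2M rounds: the forward flood from v and the backward flood
  towards u over rounds M, ..., 2M-1 must share a node.\<close>
lemma flood_completes_from_halves:
  assumes half: "\<And>H u. (\<And>t. P (H t)) \<Longrightarrow> u \<in> {1..n} \<Longrightarrow>
                   real n / 2 < real (card (flood_from n H {u} M))"
    and G: "\<And>t. P (G t)" and v: "v \<in> {1..n}"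
  shows "flood n G v (2 * M) = {1..n}"
proof
  show "flood n G v (2 * M) \<subseteq> {1..n}"
    unfolding flood_eq_flood_from using v by (intro flood_from_subset) auto
next
  show "{1..n} \<subseteq> flood n G v (2 * M)"
  proof
    fix u assume u: "u \<in> {1..n}"
    define G2 where "G2 = (\<lambda>j. G (M + j))"
    define F where "F = flood_from n G {v} M"
    define B where "B = flood_from n (\<lambda>j. G2 (M - 1 - j)) {u} M"
    have "F \<subseteq> {1..n}" "B \<subseteq> {1..n}"
      unfolding F_def B_def using u v by (simp_all only: flood_from_subset insert_subset empty_subsetI)
    moreover have "real n / 2 < real (card F)"
      unfolding F_def using half[OF G v] .
    moreover have "real n / 2 < real (card B)"
      unfolding B_def G2_def using half[OF G u] .
    ultimately have "F \<inter> B \<noteq> {}"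
      by (intro large_subsets_intersect)
    then obtain w where w: "w \<in> F" "w \<in> B" by blast
    have "u \<in> flood_from n G2 {w} M"
      using flood_from_reverse[of u n w G2 M] u w(2) unfolding B_def by simp
    also have "\<dots> \<subseteq> flood_from n G2 F M"
      using w(1) by (intro flood_from_mono_set) auto
    also have "\<dots> = flood n G v (2 * M)"
      unfolding F_def G2_def flood_eq_flood_from flood_from_shift[symmetric] by (simp add: mult_2)
    finally show "u \<in> flood n G v (2 * M)" .
  qed
qed

section \<open>Growth in one round\<close>

text \<open>One flooding round in an (h,k)-expander multiplies an informed set of size
  at most h by at least 1 + k, because the new nodes are disjoint from the old ones.\<close>
lemma expansion_round:
  assumes "expander n E h k" "I \<subseteq> {1..n}" "real (card I) \<le> h"
  shows "(1 + k) * real (card I) \<le> real (card (I \<union> nbhd n E I))"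
proof -
  have "k * real (card I) \<le> real (card (nbhd n E I))"
    using assms unfolding expander_def by blast
  moreover have "finite I" "finite (nbhd n E I)" "I \<inter> nbhd n E I = {}"
    using assms(2) finite_subset unfolding nbhd_def by auto
  ultimately show ?thesis
    by (simp add: card_Un_disjoint algebra_simps)
qed

text \<open>Expanding a single node bounds k: at most n - 1 other nodes exist.\<close>
lemma expander_singleton_bound:
  assumes "expander n E h k" "1 \<le> h" "v \<in> {1..n}"
  shows "1 + k \<le> real n"
proof -
  have "k * 1 \<le> real (card (nbhd n E {v}))"
    using assms unfolding expander_def by force
  moreover have "card (nbhd n E {v}) \<le> card ({1..n} - {v})"
    by (intro card_mono) (auto simp: nbhd_def)
  moreover have "real (card ({1..n} - {v})) = real n - 1"
    using assms(3) by simp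
  ultimately show ?thesis
    by linarith
qed

section \<open>The potential\<close>

definition clip :: "(nat \<Rightarrow> real) \<Rightarrow> nat \<Rightarrow> real \<Rightarrow> real" where
  "clip h j x = max (h (j - 1)) (min x (h j))"

definition potential :: "(nat \<Rightarrow> real) \<Rightarrow> (nat \<Rightarrow> real) \<Rightarrow> nat \<Rightarrow> real \<Rightarrow> real" where
  "potential h k s x = (\<Sum>j=1..s. (ln (clip h j x) - ln (h (j - 1))) / ln (1 + k j))"

lemma clip_mono: "x \<le> y \<Longrightarrow> clip h j x \<le> clip h j y"
  unfolding clip_def by auto

locale expansion_profile =
  fixes h k :: "nat \<Rightarrow> real" and s :: nat
  assumes h_mono: "\<And>i j. i \<le> j \<Longrightarrow> j \<le> s \<Longrightarrow> h i \<le> h j"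
    and h0_pos: "0 < h 0"
    and k_antimono: "\<And>i j. 1 \<le> i \<Longrightarrow> i \<le> j \<Longrightarrow> j \<le> s \<Longrightarrow> k j \<le> k i"
    and k_pos: "\<And>i. 1 \<le> i \<Longrightarrow> i \<le> s \<Longrightarrow> 0 < k i"
begin

lemma h_pos: "j \<le> s \<Longrightarrow> 0 < h j"
  using h0_pos h_mono[of 0 j] by simp

lemma clip_pos: "j \<le> s \<Longrightarrow> 0 < clip h j x"
  using h_pos[of "j - 1"] unfolding clip_def by (simp add: less_max_iff_disj)

lemma ln_clip_mono: "x \<le> y \<Longrightarrow> j \<le> s \<Longrightarrow> ln (clip h j x) \<le> ln (clip h j y)"
  using clip_mono[of x y h j] clip_pos[of j] by simp

lemma ln_clip_telescope:
  "m \<le> s \<Longrightarrow> (\<Sum>j=1..m. ln (clip h j x) - ln (h (j - 1))) = ln (min (max x (h 0)) (h m)) - ln (h 0)"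
proof (induction m)
  case 0
  then show ?case by simp
next
  case (Suc m)
  have "h m \<le> h (Suc m)" "h 0 \<le> h m"
    using Suc.prems h_mono by auto
  then have "ln (min (max x (h 0)) (h m)) + (ln (clip h (Suc m) x) - ln (h m))
             = ln (min (max x (h 0)) (h (Suc m)))"
    unfolding clip_def by (cases "x \<le> h m") auto
  then show ?case using Suc by simp
qed

lemma ln_clip_increments:
  assumes "h 0 \<le> x" "x \<le> y" "y \<le> h s"
  shows "(\<Sum>j=1..s. ln (clip h j y) - ln (clip h j x)) = ln y - ln x"
proof -
  have "(\<Sum>j=1..s. ln (clip h j y) - ln (clip h j x)) =
        (\<Sum>j=1..s. ln (clip h j y) - ln (h (j - 1))) - (\<Sum>j=1..s. ln (clip h j x) - ln (h (j - 1)))"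
    by (simp add: sum_subtractf)
  also have "\<dots> = ln y - ln x"
    using ln_clip_telescope[of s y] ln_clip_telescope[of s x] assms by simp
  finally show ?thesis .
qed

text \<open>Phases before i contribute
  nothing, and later phases carry the weight 1/ln(1 + k j) \<ge> 1/ln(1 + k i).\<close>
lemma potential_increment:
  assumes i: "1 \<le> i" "i \<le> s" "x \<le> h i" and below: "\<And>j. 1 \<le> j \<Longrightarrow> j < i \<Longrightarrow> h j < x"
    and xy: "h 0 \<le> x" "x \<le> y" "y \<le> h s"
  shows "(ln y - ln x) / ln (1 + k i) \<le> potential h k s y - potential h k s x"
proof -
  let ?d = "\<lambda>j. ln (clip h j y) - ln (clip h j x)"
  have "(ln y - ln x) / ln (1 + k i) = (\<Sum>j=1..s. ?d j / ln (1 + k i))"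
    using ln_clip_increments[OF xy] by (simp add: sum_divide_distrib[symmetric])
  also have "\<dots> \<le> (\<Sum>j=1..s. ?d j / ln (1 + k j))"
  proof (rule sum_mono)
    fix j assume j: "j \<in> {1..s}"
    show "?d j / ln (1 + k i) \<le> ?d j / ln (1 + k j)"
    proof (cases "j < i")
      case True
      then have "h (j - 1) \<le> h j" "h j < x"
        using below j h_mono by auto
      then have "clip h j x = h j" "clip h j y = h j"
        using xy unfolding clip_def by auto
      then show ?thesis by simp
    next
      case False
      have "0 \<le> ?d j"
        using ln_clip_mono[of x y j] xy j by simp
      moreover have "0 < k j" "k j \<le> k i"
        using k_pos k_antimono[of i j] False i j by auto
      ultimately show ?thesis
        by (intro divide_left_mono) auto
    qed
  qed
  also have "\<dots> = potential h k s y - potential h k s x"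
    unfolding potential_def sum_subtractf[symmetric] by (simp add: diff_divide_distrib)
  finally show ?thesis .
qed

lemma potential_mono: "x \<le> y \<Longrightarrow> potential h k s x \<le> potential h k s y"
  unfolding potential_def
proof (intro sum_mono divide_right_mono)
  fix j assume "x \<le> y" "j \<in> {1..s}"
  then show "ln (clip h j x) - ln (h (j - 1)) \<le> ln (clip h j y) - ln (h (j - 1))"
    and "0 \<le> ln (1 + k j)"
    using ln_clip_mono[of x y j] k_pos[of j] by auto
qed

lemma potential_h0: "potential h k s (h 0) = 0"
  unfolding potential_def
proof (intro sum.neutral ballI)
  fix j assume j: "j \<in> {1..s}"
  then have "clip h j (h 0) = h (j - 1)"
    using h_mono[of 0 "j - 1"] h_mono[of 0 j] unfolding clip_def by auto
  then show "(ln (clip h j (h 0)) - ln (h (j - 1))) / ln (1 + k j) = 0" by simp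
qed

lemma potential_hs: "potential h k s (h s) = (\<Sum>j=1..s. ln (h j / h (j - 1)) / ln (1 + k j))"
  unfolding potential_def
proof (rule sum.cong[OF refl])
  fix j assume j: "j \<in> {1..s}"
  then have "clip h j (h s) = h j"
    using h_mono[of j s] h_mono[of "j - 1" j] unfolding clip_def by auto
  moreover have "0 < h j" "0 < h (j - 1)"
    using h_pos[of j] h_pos[of "j - 1"] j by auto
  ultimately show "(ln (clip h j (h s)) - ln (h (j - 1))) / ln (1 + k j) = ln (h j / h (j - 1)) / ln (1 + k j)"
    by (simp add: ln_div)
qed

lemma phase_of:
  assumes "1 \<le> s" "x \<le> h s"
  obtains i where "1 \<le> i" "i \<le> s" "x \<le> h i" "\<And>j. 1 \<le> j \<Longrightarrow> j < i \<Longrightarrow> h j < x"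
proof -
  define P where "P i \<longleftrightarrow> 1 \<le> i \<and> x \<le> h i" for i
  have "P s" using assms unfolding P_def by simp
  then have "P (Least P)" "Least P \<le> s"
    by (auto intro: LeastI Least_le)
  moreover have "h j < x" if "1 \<le> j" "j < Least P" for j
    using not_less_Least[OF that(2)] that(1) unfolding P_def by simp
  ultimately show ?thesis using that unfolding P_def by blast
qed

section \<open>Reaching more than h s nodes\<close>

text \<open>One flooding round gains at least 1 in potential, as long as the informed
  set stays within h s nodes: the set lies in some phase i, grows by the factor
  1 + k i, and the increment bound converts this into a gain of ln(1 + k i)/ln(1 + k i).\<close>
lemma potential_round_gain:
  assumes s: "1 \<le> s" and h0: "h 0 \<le> 1"
    and exp: "\<And>i. 1 \<le> i \<Longrightarrow> i \<le> s \<Longrightarrow> expander n E (h i) (k i)"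
    and I: "I \<subseteq> {1..n}" "I \<noteq> {}"
    and top: "real (card (I \<union> nbhd n E I)) \<le> h s"
  shows "potential h k s (real (card I)) + 1 \<le> potential h k s (real (card (I \<union> nbhd n E I)))"
proof -
  define x where "x = real (card I)"
  define y where "y = real (card (I \<union> nbhd n E I))"
  have "0 < card I"
    using I finite_subset card_gt_0_iff by blast
  then have x_ge_1: "1 \<le> x"
    unfolding x_def by simp
  have "finite (I \<union> nbhd n E I)"
    using I(1) finite_subset unfolding nbhd_def by auto
  then have "x \<le> y"
    unfolding x_def y_def by (simp add: card_mono)
  then have "x \<le> h s"
    using top unfolding y_def by linarith
  then obtain i where i: "1 \<le> i" "i \<le> s" "x \<le> h i" "\<And>j. 1 \<le> j \<Longrightarrow> j < i \<Longrightarrow> h j < x"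
    using phase_of[OF s] by blast
  have k: "0 < k i"
    using k_pos i by auto
  have grow: "(1 + k i) * x \<le> y"
    using expansion_round[OF exp[OF i(1,2)] I(1)] i(3) unfolding x_def y_def by simp
  have "ln (1 + k i) + ln x = ln ((1 + k i) * x)"
    using k x_ge_1 by (simp add: ln_mult)
  also have "\<dots> \<le> ln y"
  proof -
    have "0 < (1 + k i) * x"
      using k x_ge_1 by simp
    then show ?thesis
      using grow by simp
  qed
  finally have "1 \<le> (ln y - ln x) / ln (1 + k i)"
    using k by simp
  also have "\<dots> \<le> potential h k s y - potential h k s x"
    using potential_increment[OF i] x_ge_1 h0 \<open>x \<le> y\<close> top unfolding y_def by simp
  finally show ?thesis
    unfolding x_def y_def by simp
qed

lemma rounds_bounded_by_potential:
  assumes s: "1 \<le> s" and h0: "h 0 \<le> 1" and v: "v \<in> {1..n}"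
    and exp: "\<And>t i. 1 \<le> i \<Longrightarrow> i \<le> s \<Longrightarrow> expander n (G t) (h i) (k i)"
  shows "(\<forall>j\<le>m. real (card (flood_from n G {v} j)) \<le> h s)
         \<longrightarrow> real m \<le> potential h k s (real (card (flood_from n G {v} m)))"
proof (induction m)
  case 0
  show ?case
    using potential_mono[of "h 0" 1] potential_h0 h0 by simp
next
  case (Suc m)
  let ?I = "flood_from n G {v} m"
  show ?case
  proof
    assume small: "\<forall>j\<le>Suc m. real (card (flood_from n G {v} j)) \<le> h s"
    have I: "?I \<subseteq> {1..n}" "?I \<noteq> {}"
      using v flood_from_subset[of "{v}" n G m] flood_from_mono_time[of 0 m n G "{v}"] by auto
    have next_round: "flood_from n G {v} (Suc m) = ?I \<union> nbhd n (G m) ?I"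
      by simp
    have "real (card (flood_from n G {v} (Suc m))) \<le> h s"
      using small by blast
    then have gain: "potential h k s (real (card ?I)) + 1
                       \<le> potential h k s (real (card (flood_from n G {v} (Suc m))))"
      unfolding next_round using potential_round_gain[OF s h0 exp I] by blast
    have "\<forall>j\<le>m. real (card (flood_from n G {v} j)) \<le> h s"
      using small by simp
    with Suc.IH have "real m \<le> potential h k s (real (card ?I))"
      by (rule mp)
    with gain show "real (Suc m) \<le> potential h k s (real (card (flood_from n G {v} (Suc m))))"
      by linarith
  qed
qed

lemma flood_exceeds_top:
  assumes s: "1 \<le> s" and h0: "h 0 \<le> 1" and v: "v \<in> {1..n}"
    and exp: "\<And>t i. 1 \<le> i \<Longrightarrow> i \<le> s \<Longrightarrow> expander n (G t) (h i) (k i)"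
    and m: "potential h k s (h s) < real m"
  shows "h s < real (card (flood_from n G {v} m))"
proof (rule ccontr)
  let ?x = "\<lambda>j. real (card (flood_from n G {v} j))"
  assume "\<not> h s < ?x m"
  then have top: "?x m \<le> h s" by simp
  have fin: "finite (flood_from n G {v} m)"
    using v flood_from_subset[of "{v}" n G m] finite_subset by blast
  have "\<forall>j\<le>m. ?x j \<le> h s"
  proof (intro allI impI)
    fix j assume "j \<le> m"
    then have "card (flood_from n G {v} j) \<le> card (flood_from n G {v} m)"
      by (intro card_mono[OF fin] flood_from_mono_time)
    then show "?x j \<le> h s"
      using top by linarith
  qed
  with rounds_bounded_by_potential[OF s h0 v exp, of m]
  have "real m \<le> potential h k s (?x m)"
    by (rule mp)
  also have "\<dots> \<le> potential h k s (h s)"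
    using potential_mono[OF top] .
  finally show False using m by simp
qed

text \<open>The bound is not degenerate: for n \<ge> 4 and h s = n/2 the potential at the top
  is at least 1/2, because ln(1 + k 1) \<le> ln n \<le> 2 ln(n/2).\<close>
lemma potential_top_ge_half:
  assumes s: "1 \<le> s" and h: "h 0 = 1" "h s = real n / 2" and n: "4 \<le> n"
    and exp: "expander n E (h 1) (k 1)"
  shows "1 / 2 \<le> potential h k s (h s)"
proof -
  have k1: "0 < ln (1 + k 1)"
    using k_pos[of 1] s by simp
  have "1 + k 1 \<le> real n"
    using expander_singleton_bound[OF exp, of 1] h_mono[of 0 1] h s n by simp
  then have "ln (1 + k 1) \<le> ln (real n)"
    using k_pos[of 1] s by simp
  also have "\<dots> \<le> 2 * ln (real n / 2)"
  proof -
    have "2 * ln 2 = ln (4::real)"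
      using ln_mult[of 2 2] by simp
    also have "\<dots> \<le> ln (real n)"
      using n by simp
    finally show ?thesis
      using n ln_div[of "real n" 2] by simp
  qed
  finally have "1 / 2 \<le> ln (real n / 2) / ln (1 + k 1)"
    using k1 by (simp add: field_simps)
  also have "\<dots> = (ln (h s) - ln (h 0)) / ln (1 + k 1)"
    unfolding h by simp
  also have "\<dots> \<le> potential h k s (h s) - potential h k s (h 0)"
    using potential_increment[of 1 "h 0" "h s"] s h_mono[of 0 1] h_mono[of 0 s] by simp
  finally show ?thesis
    using potential_h0 by simp
qed

text \<open>The flooding bound in terms of the potential: with h 0 = 1 and h s = n/2, every
  source informs all nodes within 2(\<lfloor>S\<rfloor> + 1) \<le> 6S rounds, S = potential(h s).\<close>
lemma flooding_time_le_potential: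
  assumes s: "1 \<le> s" and h: "h 0 = 1" "h s = real n / 2" and n: "4 \<le> n"
    and exp: "\<And>t. \<forall>i\<in>{1..s}. expander n (G t) (h i) (k i)"
  shows "flooding_time_le n G (6 * potential h k s (h s))"
  unfolding flooding_time_le_def
proof (intro ballI conjI)
  define S where "S = potential h k s (h s)"
  define M where "M = nat \<lfloor>S\<rfloor> + 1"
  have "expander n (G 0) (h 1) (k 1)"
    using exp[of 0] s by simp
  then have S_half: "1 / 2 \<le> S"
    unfolding S_def by (rule potential_top_ge_half[OF s h n])
  have M: "S < real M" "real M \<le> S + 1"
    unfolding M_def using S_half by linarith+
  then have half: "real n / 2 < real (card (flood_from n H {u} M))"
    if "\<And>t. \<forall>i\<in>{1..s}. expander n (H t) (h i) (k i)" "u \<in> {1..n}" for H u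
    using flood_exceeds_top[OF s _ that(2), of H M] that(1) h unfolding S_def by auto
  fix v assume v: "v \<in> {1..n}"
  have full: "flood n G v (2 * M) = {1..n}"
    by (rule flood_completes_from_halves[where P = "\<lambda>E. \<forall>i\<in>{1..s}. expander n E (h i) (k i)",
          OF half exp v])
  then show "\<exists>t. flood n G v t = {1..n}" by blast
  have "flood_T n G v \<le> 2 * M"
    unfolding flood_T_def using full by (rule Least_le)
  then show "real (flood_T n G v) \<le> 6 * S"
    using M(2) S_half by linarith
qed

end

lemma mono_from_steps:
  fixes f :: "nat \<Rightarrow> real"
  assumes succ: "\<And>i. a \<le> i \<Longrightarrow> i < s \<Longrightarrow> f i \<le> f (Suc i)" and "a \<le> i" "i \<le> j" "j \<le> s"
  shows "f i \<le> f j"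
  using assms(3,4)
proof (induction j rule: dec_induct)
  case (step m)
  then show ?case using succ[of m] assms(2) by simp
qed simp

lemma expansion_profile_from_steps:
  fixes h k :: "nat \<Rightarrow> real"
  assumes h0: "h 0 = 1" and h01: "h 0 \<le> h 1" and h_inc: "\<forall>i. 1 \<le> i \<and> i < s \<longrightarrow> h i < h (i + 1)"
    and k_pos: "\<forall>i\<in>{1..s}. k i > 0" and k_dec: "\<forall>i. 1 \<le> i \<and> i < s \<longrightarrow> k (i + 1) \<le> k i"
  shows "expansion_profile h k s"
proof
  have h_step: "h i \<le> h (Suc i)" if "0 \<le> i" "i < s" for i
    using h01 h_inc that by (cases i) (auto intro: less_imp_le)
  show "h i \<le> h j" if "i \<le> j" "j \<le> s" for i j
    using mono_from_steps[of 0 s h, OF h_step] that by blast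
  have k_step: "- k i \<le> - k (Suc i)" if "1 \<le> i" "i < s" for i
    using k_dec that by simp
  show "k j \<le> k i" if "1 \<le> i" "i \<le> j" "j \<le> s" for i j
    using mono_from_steps[of 1 s "\<lambda>i. - k i", OF k_step] that by simp
qed (use h0 k_pos in auto)

theorem mainTheorem1:
  shows "\<exists>C::real. C > 0 \<and>
    (\<forall>(n::nat) (G::nat \<Rightarrow> nat set set) (s::nat) (h::nat \<Rightarrow> real) (k::nat \<Rightarrow> real).
      n \<ge> 4 \<and> even n \<and> evolving_graph n G \<and>
      h 0 = 1 \<and> h 0 \<le> h 1 \<and> (\<forall>i. 1 \<le> i \<and> i < s \<longrightarrow> h i < h (i + 1)) \<and> h s = real n / 2 \<and>
      (\<forall>i\<in>{1..s}. k i > 0) \<and> (\<forall>i. 1 \<le> i \<and> i < s \<longrightarrow> k (i + 1) \<le> k i) \<and>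
      (\<forall>t. \<forall>i\<in>{1..s}. expander n (G t) (h i) (k i))
      \<longrightarrow> flooding_time_le n G (C * (\<Sum>i=1..s. ln (h i / h (i - 1)) / ln (1 + k i))))"
proof (rule exI[of _ 6], intro conjI allI impI)
  fix n :: nat and G :: "nat \<Rightarrow> nat set set" and s :: nat and h k :: "nat \<Rightarrow> real"
  assume "n \<ge> 4 \<and> even n \<and> evolving_graph n G \<and>
      h 0 = 1 \<and> h 0 \<le> h 1 \<and> (\<forall>i. 1 \<le> i \<and> i < s \<longrightarrow> h i < h (i + 1)) \<and> h s = real n / 2 \<and>
      (\<forall>i\<in>{1..s}. k i > 0) \<and> (\<forall>i. 1 \<le> i \<and> i < s \<longrightarrow> k (i + 1) \<le> k i) \<and>
      (\<forall>t. \<forall>i\<in>{1..s}. expander n (G t) (h i) (k i))"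
  then have n: "4 \<le> n" and h: "h 0 = 1" "h s = real n / 2"
    and profile: "expansion_profile h k s"
    and exp: "\<forall>t. \<forall>i\<in>{1..s}. expander n (G t) (h i) (k i)"
    using expansion_profile_from_steps[of h s k] by blast+
  interpret expansion_profile h k s
    by (rule profile)
  \<comment> \<open>s = 0 would force n/2 = h 0 = 1\<close>
  have s: "1 \<le> s"
    using h n by (cases s) auto
  show "flooding_time_le n G (6 * (\<Sum>i=1..s. ln (h i / h (i - 1)) / ln (1 + k i)))"
    using flooding_time_le_potential[OF s h n] exp unfolding potential_hs by blast
qed simp

end
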